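(* Let $N>4$ and $A\in C^1(\mathbb{R}^N,\mathbb{R}^N)\cap L^\infty(\mathbb{R}^N,\mathbb{R}^N)\cap L^r(\mathbb{R}^N,\mathbb{R}^N)$ for some $1<r<N$. Define $H_2(\mu,\xi)=\frac12\int_{\mathbb{R}^N}|A(x)|^2|z_{\mu,\xi}(x)|^2dx$ for $\mu>0$, $\xi\in\mathbb{R}^N$. Then $$\lim_{\mu+|\xi|\to+\infty}H_2(\mu,\xi)=0.$$
   Context: $\kappa_N=(N(N-2))^{(N-2)/4}$ and $z_{\mu,\xi}(x)=\kappa_N\mu^{(N-2)/2}(\mu^2+|x-\xi|^2)^{-(N-2)/2}$ for $\mu>0$, $\xi\in\mathbb{R}^N$. *)

theory Defs
  imports "HOL-Analysis.Analysis"
begin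

text \<open>Dimension N is CARD('n); points of R^N are vectors of type real^'n.\<close>

definition kappaN :: "nat \<Rightarrow> real" where
  "kappaN N = (real N * (real N - 2)) powr ((real N - 2) / 4)"

definition zbubble :: "real \<Rightarrow> real^'n \<Rightarrow> real^'n \<Rightarrow> real" where
  "zbubble \<mu> \<xi> x = (let N = CARD('n) in
      kappaN N * \<mu> powr ((real N - 2) / 2)
      * (\<mu>\<^sup>2 + (norm (x - \<xi>))\<^sup>2) powr (- (real N - 2) / 2))"

definition C1_on_UNIV :: "(real^'n \<Rightarrow> real^'n) \<Rightarrow> bool" where
  "C1_on_UNIV A \<longleftrightarrow> (\<exists>D :: real^'n \<Rightarrow> ((real^'n, real^'n) blinfun).
      (\<forall>x. (A has_derivative blinfun_apply (D x)) (at x)) \<and> continuous_on UNIV D)"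

definition H2 :: "(real^'n \<Rightarrow> real^'n) \<Rightarrow> real \<Rightarrow> real^'n \<Rightarrow> real" where
  "H2 A \<mu> \<xi> = (1/2) * (LINT x|lborel. (norm (A x))\<^sup>2 * (zbubble \<mu> \<xi> x)\<^sup>2)"

end

theory Submission
  imports Defs "HOL-Probability.Sinc_Integral"
begin

(* Write z^2 = kappa^2 k^(N-2) with the Cauchy kernel k = mu / (mu^2 + |x - xi|^2).
  On a fixed ball |x| <= R the kernel is at most 2 / (mu + |xi| - R), so there |A|^2 z^2 is
  uniformly small once mu + |xi| is large. Outside the ball, Young's inequality with the
  exponents N/2 and N/(N-2) and a weight w bounds |A|^2 z^2 by
  w^(-N/2) |A|^N + w^(N/(N-2)) z^(2N/(N-2)). The first term has small integral outside a large
  ball, since |A|^N is integrable (A is bounded and in L^r with r < N). The second is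
  dominated by kappa^(2N/(N-2)) times a product of one-dimensional Cauchy kernels, whose
  integral pi^N does not depend on mu and xi, and it is made small by the choice of w. *)

definition cauchy_kernel :: "real \<Rightarrow> real \<Rightarrow> real" where
  "cauchy_kernel \<mu> s = \<mu> / (\<mu>\<^sup>2 + s\<^sup>2)"

lemma borel_measurable_cauchy_kernel [measurable]: "cauchy_kernel \<mu> \<in> borel_measurable borel"
  unfolding cauchy_kernel_def by measurable

lemma cauchy_kernel_pos: "\<mu> > 0 \<Longrightarrow> cauchy_kernel \<mu> s > 0"
  unfolding cauchy_kernel_def by (simp add: add_pos_nonneg)

lemma cauchy_kernel_antimono:
  assumes "\<mu> > 0" and "\<bar>s\<bar> \<le> \<bar>t\<bar>"
  shows "cauchy_kernel \<mu> t \<le> cauchy_kernel \<mu> s"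
proof -
  have "s\<^sup>2 \<le> t\<^sup>2" using assms(2) by (simp add: abs_le_square_iff)
  then show ?thesis
    unfolding cauchy_kernel_def using assms(1) by (intro divide_left_mono) (auto simp: add_pos_nonneg)
qed

lemma cauchy_kernel_le:
  assumes "\<mu> > 0" and "d \<ge> 0"
  shows "cauchy_kernel \<mu> d \<le> 2 / (\<mu> + d)"
proof -
  have "2 * (\<mu>\<^sup>2 + d\<^sup>2) - \<mu> * (\<mu> + d) = (\<mu> - d)\<^sup>2 + \<mu> * d + d\<^sup>2"
    by (simp add: power2_eq_square algebra_simps)
  moreover have "0 \<le> (\<mu> - d)\<^sup>2 + \<mu> * d + d\<^sup>2"
    using assms by simp
  ultimately have "\<mu> * (\<mu> + d) \<le> 2 * (\<mu>\<^sup>2 + d\<^sup>2)" by linarith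
  moreover have "\<mu>\<^sup>2 + d\<^sup>2 > 0" "\<mu> + d > 0" using assms by (auto simp: add_pos_nonneg)
  ultimately show ?thesis
    unfolding cauchy_kernel_def by (simp add: divide_simps mult.commute)
qed

lemma nn_integral_cauchy_kernel:
  assumes "\<mu> > 0"
  shows "(\<integral>\<^sup>+s. ennreal (cauchy_kernel \<mu> (s - c)) \<partial>lborel) = pi"
proof -
  have scale: "ennreal \<mu> * ennreal (cauchy_kernel \<mu> (\<mu> * s)) = ennreal (inverse (1 + s\<^sup>2))"
    for s
  proof -
    have denom: "\<mu>\<^sup>2 + (\<mu> * s)\<^sup>2 = \<mu>\<^sup>2 * (1 + s\<^sup>2)"
      by (simp add: power2_eq_square algebra_simps)
    have "\<mu> * (\<mu> / (\<mu>\<^sup>2 * t)) = inverse t" if "t > 0" for t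
      using assms that by (simp add: power2_eq_square field_simps)
    then have "\<mu> * cauchy_kernel \<mu> (\<mu> * s) = inverse (1 + s\<^sup>2)"
      unfolding cauchy_kernel_def denom by (simp add: add_pos_nonneg)
    then show ?thesis
      using assms by (simp add: ennreal_mult'[symmetric])
  qed
  have "(\<integral>\<^sup>+s. ennreal (cauchy_kernel \<mu> (s - c)) \<partial>lborel)
      = \<bar>\<mu>\<bar> * (\<integral>\<^sup>+s. ennreal (cauchy_kernel \<mu> (c + \<mu> * s - c)) \<partial>lborel)"
    using assms by (intro nn_integral_real_affine) auto
  also have "\<dots> = (\<integral>\<^sup>+s. ennreal \<mu> * ennreal (cauchy_kernel \<mu> (\<mu> * s)) \<partial>lborel)"
    using assms by (simp add: nn_integral_cmult)
  also have "\<dots> = (\<integral>\<^sup>+s. ennreal (inverse (1 + s\<^sup>2)) \<partial>lborel)"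
    by (simp only: scale)
  also have "\<dots> = pi"
  proof -
    have "integrable lborel (\<lambda>s::real. inverse (1 + s\<^sup>2))"
      using integrable_inverse_1_plus_square by (simp add: set_integrable_def)
    moreover have "(LINT s|lborel. inverse (1 + s\<^sup>2)) = pi"
      using LBINT_inverse_1_plus_square
      by (simp add: interval_lebesgue_integral_def set_lebesgue_integral_def)
    ultimately show ?thesis by (simp add: nn_integral_eq_integral add_pos_nonneg)
  qed
  finally show ?thesis .
qed

lemma
  fixes \<xi> :: "'a::euclidean_space"
  assumes "\<mu> > 0"
  shows integrable_cauchy_kernel_prod:
      "integrable lborel (\<lambda>x. \<Prod>b\<in>Basis. cauchy_kernel \<mu> ((x - \<xi>) \<bullet> b))"
    and integral_cauchy_kernel_prod:
      "(LINT x|lborel. (\<Prod>b\<in>Basis. cauchy_kernel \<mu> ((x - \<xi>) \<bullet> b))) = pi ^ DIM('a)"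
proof -
  have pos: "\<And>s. 0 \<le> cauchy_kernel \<mu> s" using cauchy_kernel_pos[OF assms] by (simp add: less_imp_le)
  then have nonneg: "\<And>x. 0 \<le> (\<Prod>b\<in>Basis. cauchy_kernel \<mu> ((x - \<xi>) \<bullet> b))"
    by (simp add: prod_nonneg)
  have "(\<integral>\<^sup>+x. ennreal (\<Prod>b\<in>Basis. cauchy_kernel \<mu> ((x - \<xi>) \<bullet> b)) \<partial>lborel)
      = (\<integral>\<^sup>+x. (\<Prod>b\<in>Basis. ennreal (cauchy_kernel \<mu> (x \<bullet> b - \<xi> \<bullet> b))) \<partial>lborel)"
    using pos by (intro nn_integral_cong) (simp add: prod_ennreal inner_diff_left)
  also have "\<dots> = (\<Prod>b\<in>(Basis::'a set). \<integral>\<^sup>+s. ennreal (cauchy_kernel \<mu> (s - \<xi> \<bullet> b)) \<partial>lborel)"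
    by (rule nn_integral_lborel_prod[where f="\<lambda>b s. ennreal (cauchy_kernel \<mu> (s - \<xi> \<bullet> b))"]) auto
  also have "\<dots> = ennreal (pi ^ DIM('a))"
    by (simp add: nn_integral_cauchy_kernel[OF assms] ennreal_power)
  finally have nn: "(\<integral>\<^sup>+x. ennreal (\<Prod>b\<in>Basis. cauchy_kernel \<mu> ((x - \<xi>) \<bullet> b)) \<partial>lborel)
      = ennreal (pi ^ DIM('a))" .
  show "integrable lborel (\<lambda>x. \<Prod>b\<in>Basis. cauchy_kernel \<mu> ((x - \<xi>) \<bullet> b))"
    by (intro integrableI_nonneg) (auto simp: nonneg nn)
  show "(LINT x|lborel. (\<Prod>b\<in>Basis. cauchy_kernel \<mu> ((x - \<xi>) \<bullet> b))) = pi ^ DIM('a)"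
    by (subst integral_eq_nn_integral) (auto simp: nonneg nn)
qed

lemma cauchy_kernel_pow_le_prod:
  fixes v :: "'a::euclidean_space"
  assumes "\<mu> > 0"
  shows "cauchy_kernel \<mu> (norm v) ^ DIM('a) \<le> (\<Prod>b\<in>Basis. cauchy_kernel \<mu> (v \<bullet> b))"
proof -
  have "cauchy_kernel \<mu> (norm v) ^ DIM('a) = (\<Prod>b\<in>(Basis::'a set). cauchy_kernel \<mu> (norm v))"
    by simp
  also have "\<dots> \<le> (\<Prod>b\<in>Basis. cauchy_kernel \<mu> (v \<bullet> b))"
    using assms by (intro prod_mono conjI cauchy_kernel_antimono less_imp_le[OF cauchy_kernel_pos])
      (auto simp: Basis_le_norm)
  finally show ?thesis .
qed

lemma borel_measurable_zbubble [measurable]: "zbubble \<mu> \<xi> \<in> borel_measurable borel"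
  unfolding zbubble_def Let_def by measurable

lemma zbubble_sq:
  fixes \<xi> x :: "real^'n"
  assumes "\<mu> > 0"
  shows "(zbubble \<mu> \<xi> x)\<^sup>2
    = (kappaN CARD('n))\<^sup>2 * cauchy_kernel \<mu> (norm (x - \<xi>)) powr (real CARD('n) - 2)"
proof -
  define e where "e = (real CARD('n) - 2) / 2"
  define s where "s = \<mu>\<^sup>2 + (norm (x - \<xi>))\<^sup>2"
  have s: "s > 0" unfolding s_def using assms by (simp add: add_pos_nonneg)
  have minus_e: "- (real CARD('n) - 2) / 2 = - e" unfolding e_def by (simp add: field_simps)
  have "zbubble \<mu> \<xi> x = kappaN CARD('n) * \<mu> powr e * s powr (- e)"
    unfolding zbubble_def Let_def minus_e unfolding e_def s_def by simp
  also have "\<dots> = kappaN CARD('n) * (\<mu> powr e / s powr e)"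
    by (simp only: powr_minus divide_inverse mult.assoc)
  also have "\<dots> = kappaN CARD('n) * cauchy_kernel \<mu> (norm (x - \<xi>)) powr e"
    unfolding cauchy_kernel_def s_def[symmetric] using assms s by (simp add: powr_divide)
  finally have "(zbubble \<mu> \<xi> x)\<^sup>2 = (kappaN CARD('n))\<^sup>2 * (cauchy_kernel \<mu> (norm (x - \<xi>)) powr e)\<^sup>2"
    by (simp add: power_mult_distrib)
  also have "(cauchy_kernel \<mu> (norm (x - \<xi>)) powr e)\<^sup>2 = cauchy_kernel \<mu> (norm (x - \<xi>)) powr (2 * e)"
    by (simp add: power2_eq_square powr_add[symmetric])
  also have "2 * e = real CARD('n) - 2" unfolding e_def by simp
  finally show ?thesis .
qed

lemma zbubble_sq_powr:
  fixes \<xi> x :: "real^'n"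
  assumes "\<mu> > 0" and "CARD('n) > 2"
  shows "((zbubble \<mu> \<xi> x)\<^sup>2) powr (real CARD('n) / (real CARD('n) - 2))
    = ((kappaN CARD('n))\<^sup>2) powr (real CARD('n) / (real CARD('n) - 2))
      * cauchy_kernel \<mu> (norm (x - \<xi>)) ^ CARD('n)"
  using assms cauchy_kernel_pos[OF assms(1)]
  by (simp add: zbubble_sq powr_mult powr_powr powr_realpow)

lemma zbubble_sq_le_near:
  fixes \<xi> x :: "real^'n"
  assumes "CARD('n) > 2" and "\<mu> > 0" and "norm x \<le> R" and "\<mu> + norm \<xi> - R \<ge> 2"
  shows "(zbubble \<mu> \<xi> x)\<^sup>2 \<le> (kappaN CARD('n))\<^sup>2 * (2 / (\<mu> + norm \<xi> - R))"
proof -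
  let ?y = "cauchy_kernel \<mu> (norm (x - \<xi>))"
  have "norm \<xi> \<le> norm x + norm (x - \<xi>)"
    by (metis norm_minus_commute norm_triangle_sub)
  then have "\<mu> + norm \<xi> - R \<le> \<mu> + norm (x - \<xi>)"
    using assms(3) by linarith
  have "?y \<le> 2 / (\<mu> + norm (x - \<xi>))"
    using assms(2) by (rule cauchy_kernel_le) simp
  also have "\<dots> \<le> 2 / (\<mu> + norm \<xi> - R)"
    using assms(4) \<open>\<mu> + norm \<xi> - R \<le> \<mu> + norm (x - \<xi>)\<close> by (intro divide_left_mono) auto
  finally have y_le: "?y \<le> 2 / (\<mu> + norm \<xi> - R)" .
  moreover have "2 / (\<mu> + norm \<xi> - R) \<le> 1"
    using assms(4) by simp
  ultimately have "?y powr (real CARD('n) - 2) \<le> ?y"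
    using assms(1) cauchy_kernel_pos[OF assms(2)] by (intro powr_le_one_le) auto
  with y_le show ?thesis
    unfolding zbubble_sq[OF assms(2)] by (intro mult_left_mono) simp_all
qed

lemma Youngs_inequality_weighted:
  fixes a b w p q :: real
  assumes "p > 1" "q > 1" "1/p + 1/q = 1" "a \<ge> 0" "b \<ge> 0" "w > 0"
  shows "a * b \<le> w powr (- p) * a powr p + w powr q * b powr q"
proof -
  have "a * b = (a / w) * (w * b)" using assms by simp
  also have "\<dots> \<le> (a / w) powr p / p + (w * b) powr q / q"
    using assms by (intro Youngs_inequality) auto
  also have "\<dots> \<le> (a / w) powr p + (w * b) powr q"
    using assms by (intro add_mono) (simp_all add: divide_le_eq mult_le_cancel_left1)
  also have "\<dots> = w powr (- p) * a powr p + w powr q * b powr q"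
    using assms by (simp add: powr_divide powr_minus_divide powr_mult)
  finally show ?thesis .
qed

lemma exists_pos_powr_mult_less:
  fixes q K \<epsilon> :: real
  assumes "q > 0" and "K \<ge> 0" and "\<epsilon> > 0"
  obtains w where "w > 0" and "w powr q * K < \<epsilon>"
proof
  define w where "w = (\<epsilon> / (K + 1)) powr (1 / q)"
  show "w > 0" unfolding w_def using assms by simp
  have "w powr q = \<epsilon> / (K + 1)"
    unfolding w_def using assms by (simp add: powr_powr)
  then have "w powr q * K = \<epsilon> * (K / (K + 1))"
    by simp
  also have "\<dots> < \<epsilon> * 1"
    using assms by (intro mult_strict_left_mono) simp_all
  finally show "w powr q * K < \<epsilon>" by simp
qed

lemma integral_outside_cball_small:
  fixes g :: "'a::euclidean_space \<Rightarrow> real"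
  assumes "integrable lborel g" and "\<eta> > 0"
  obtains R where "(LINT x|lborel. indicator (- cball 0 R) x * g x) < \<eta>"
proof -
  have [measurable]: "g \<in> borel_measurable lborel" using assms(1) by auto
  have "(\<lambda>i. LINT x|lborel. indicator (- cball 0 (real i)) x * g x) \<longlonglongrightarrow> (LINT (x::'a)|lborel. 0)"
  proof (rule integral_dominated_convergence[where w="\<lambda>x. norm (g x)" and f="\<lambda>x. 0"
        and s="\<lambda>i x. indicator (- cball 0 (real i)) x * g x"])
    show "AE x in lborel. (\<lambda>i. indicator (- cball 0 (real i)) x * g x) \<longlonglongrightarrow> 0"
    proof (rule AE_I2)
      fix x :: 'a
      obtain n :: nat where "norm x \<le> real n" using real_arch_simple by blast
      then have "\<forall>\<^sub>F i in sequentially. indicator (- cball 0 (real i)) x * g x = 0"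
        unfolding eventually_sequentially by (intro exI[of _ n]) (auto simp: indicator_def)
      then show "(\<lambda>i. indicator (- cball 0 (real i)) x * g x) \<longlonglongrightarrow> 0"
        by (rule tendsto_eventually)
    qed
  qed (use assms(1) in \<open>auto simp: indicator_def\<close>)
  then have "\<forall>\<^sub>F i in sequentially. (LINT x|lborel. indicator (- cball 0 (real i)) x * g x) < \<eta>"
    using assms(2) by (simp add: order_tendstoD(2))
  then obtain i where "(LINT x|lborel. indicator (- cball 0 (real i)) x * g x) < \<eta>"
    unfolding eventually_sequentially by blast
  then show ?thesis by (rule that)
qed

lemma integrable_powr_of_bounded:
  fixes f :: "'a \<Rightarrow> real"
  assumes [measurable]: "f \<in> borel_measurable M"
    and "\<And>x. 0 \<le> f x" and "\<And>x. f x \<le> C"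
    and "integrable M (\<lambda>x. f x powr r)" and "r \<le> s"
  shows "integrable M (\<lambda>x. f x powr s)"
proof (rule Bochner_Integration.integrable_bound)
  show "integrable M (\<lambda>x. C powr (s - r) * f x powr r)"
    using assms(4) by (rule integrable_mult_right)
  show "AE x in M. norm (f x powr s) \<le> norm (C powr (s - r) * f x powr r)"
  proof (rule AE_I2)
    fix x
    show "norm (f x powr s) \<le> norm (C powr (s - r) * f x powr r)"
    proof (cases "f x = 0")
      case False
      then have "f x powr s = f x powr (s - r) * f x powr r"
        by (simp add: powr_add[symmetric])
      also have "\<dots> \<le> C powr (s - r) * f x powr r"
        using assms(2,3,5) by (intro mult_right_mono powr_mono2) auto
      finally show ?thesis by simp
    qed simp
  qed
qed simp

lemma C1_on_UNIV_imp_continuous: "C1_on_UNIV A \<Longrightarrow> continuous_on UNIV A"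
  unfolding C1_on_UNIV_def
  by (metis continuous_at_imp_continuous_on has_derivative_continuous)

lemma bubble_energy_density_le:
  fixes \<xi> x :: "real^'n"
  assumes N: "CARD('n) > 2" and a: "0 \<le> a" "a \<le> M"
    and \<mu>: "\<mu> > 0" and w: "w > 0" and far: "\<mu> + norm \<xi> - R \<ge> 2"
  shows "a\<^sup>2 * (zbubble \<mu> \<xi> x)\<^sup>2
    \<le> indicator (cball 0 R) x * (M\<^sup>2 * (kappaN CARD('n))\<^sup>2 * (2 / (\<mu> + norm \<xi> - R)))
      + w powr (- (real CARD('n) / 2)) * (indicator (- cball 0 R) x * a powr CARD('n))
      + w powr (real CARD('n) / (real CARD('n) - 2))
        * (((kappaN CARD('n))\<^sup>2) powr (real CARD('n) / (real CARD('n) - 2))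
          * (\<Prod>b\<in>Basis. cauchy_kernel \<mu> ((x - \<xi>) \<bullet> b)))"
    (is "_ \<le> ?near + w powr (- ?p) * _ + w powr ?q * (?k2q * ?P)")
proof (cases "norm x \<le> R")
  case True
  have "a\<^sup>2 * (zbubble \<mu> \<xi> x)\<^sup>2 \<le> M\<^sup>2 * ((kappaN CARD('n))\<^sup>2 * (2 / (\<mu> + norm \<xi> - R)))"
    using zbubble_sq_le_near[OF N \<mu> True far] a by (intro mult_mono power_mono) auto
  moreover have "0 \<le> w powr ?q * (?k2q * ?P)"
    using cauchy_kernel_pos[OF \<mu>] by (simp add: prod_nonneg less_imp_le)
  ultimately show ?thesis
    using True by (simp add: indicator_def mult.assoc)
next
  case False
  have "a\<^sup>2 * (zbubble \<mu> \<xi> x)\<^sup>2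
      \<le> w powr (- ?p) * (a\<^sup>2) powr ?p + w powr ?q * ((zbubble \<mu> \<xi> x)\<^sup>2) powr ?q"
    using N w by (intro Youngs_inequality_weighted) (auto simp: field_simps)
  also have "(a\<^sup>2) powr ?p = a powr CARD('n)"
    using a by (cases "a = 0") (simp_all add: powr_powr flip: powr_numeral)
  also have "((zbubble \<mu> \<xi> x)\<^sup>2) powr ?q = ?k2q * cauchy_kernel \<mu> (norm (x - \<xi>)) ^ CARD('n)"
    by (rule zbubble_sq_powr[OF \<mu> N])
  also have "\<dots> \<le> ?k2q * ?P"
    using cauchy_kernel_pow_le_prod[OF \<mu>, of "x - \<xi>"] by (simp add: mult_left_mono)
  finally show ?thesis
    using False w by (simp add: indicator_def mult_left_mono)
qed

lemma integral_bubble_energy_le: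
  fixes A :: "real^'n \<Rightarrow> real^'n" and \<xi> :: "real^'n"
  assumes N: "CARD('n) > 2" and [measurable]: "A \<in> borel_measurable borel"
    and bound: "\<And>x. norm (A x) \<le> M"
    and int: "integrable lborel (\<lambda>x. norm (A x) powr CARD('n))"
    and \<mu>: "\<mu> > 0" and w: "w > 0" and far: "\<mu> + norm \<xi> - R \<ge> 2"
  shows "(LINT x|lborel. (norm (A x))\<^sup>2 * (zbubble \<mu> \<xi> x)\<^sup>2)
    \<le> M\<^sup>2 * (kappaN CARD('n))\<^sup>2 * measure lborel (cball (0::real^'n) R) * (2 / (\<mu> + norm \<xi> - R))
      + w powr (- (real CARD('n) / 2))
        * (LINT x|lborel. indicator (- cball 0 R) x * norm (A x) powr CARD('n))
      + w powr (real CARD('n) / (real CARD('n) - 2))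
        * (((kappaN CARD('n))\<^sup>2) powr (real CARD('n) / (real CARD('n) - 2)) * pi ^ CARD('n))"
    (is "_ \<le> ?near + w powr (- ?p) * ?tail + w powr ?q * (?k2q * _)")
proof -
  define P where "P x = (\<Prod>b\<in>Basis. cauchy_kernel \<mu> ((x - \<xi>) \<bullet> b))" for x
  define G where "G x = indicator (cball 0 R) x * (M\<^sup>2 * (kappaN CARD('n))\<^sup>2 * (2 / (\<mu> + norm \<xi> - R)))
    + w powr (- ?p) * (indicator (- cball 0 R) x * norm (A x) powr CARD('n))
    + w powr ?q * (?k2q * P x)" for x
  have P_int: "integrable lborel P" and P_nonneg: "\<And>x. P x \<ge> 0"
    unfolding P_def using integrable_cauchy_kernel_prod[OF \<mu>] cauchy_kernel_pos[OF \<mu>]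
    by (auto intro: prod_nonneg less_imp_le)
  have tail_int: "integrable lborel (\<lambda>x. indicator (- cball 0 R) x * norm (A x) powr CARD('n))"
    by (rule Bochner_Integration.integrable_bound[OF int]) (auto simp: indicator_def)
  have ball_int: "integrable lborel (\<lambda>x. indicator (cball (0::real^'n) R) x * c)" for c :: real
    using emeasure_lborel_cball_finite by (intro integrable_mult_left integrable_real_indicator) auto
  have G_int: "integrable lborel G"
    unfolding G_def using ball_int tail_int P_int by auto
  have G_integral: "(LINT x|lborel. G x) = ?near + w powr (- ?p) * ?tail + w powr ?q * (?k2q * pi ^ CARD('n))"
    unfolding G_def using ball_int tail_int P_int
    by (simp add: integral_cauchy_kernel_prod[OF \<mu>, of \<xi>, folded P_def] mult.assoc)
  have G_nonneg: "G x \<ge> 0" for x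
  proof -
    have "0 \<le> 2 / (\<mu> + norm \<xi> - R)" using far by simp
    then show ?thesis
      unfolding G_def using P_nonneg[of x] by (intro add_nonneg_nonneg) simp_all
  qed
  have "(LINT x|lborel. (norm (A x))\<^sup>2 * (zbubble \<mu> \<xi> x)\<^sup>2) \<le> (LINT x|lborel. G x)"
  proof (rule integral_mono'[OF G_int])
    show "(norm (A x))\<^sup>2 * (zbubble \<mu> \<xi> x)\<^sup>2 \<le> G x" for x
      unfolding G_def P_def by (rule bubble_energy_density_le[OF N norm_ge_zero bound \<mu> w far])
  qed (rule G_nonneg)
  then show ?thesis
    unfolding G_integral .
qed

lemma H2_vanishes_at_infinity:
  fixes A :: "real^'n \<Rightarrow> real^'n"
  assumes N: "CARD('n) > 2" and A: "A \<in> borel_measurable borel" and bound: "\<And>x. norm (A x) \<le> M"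
    and int: "integrable lborel (\<lambda>x. norm (A x) powr CARD('n))"
  shows "\<forall>\<epsilon>>0. \<exists>R. \<forall>\<mu>>0. \<forall>\<xi>. \<mu> + norm \<xi> > R \<longrightarrow> \<bar>H2 A \<mu> \<xi>\<bar> < \<epsilon>"
proof (intro allI impI)
  fix \<epsilon> :: real
  assume \<epsilon>: "\<epsilon> > 0"
  define p where "p = real CARD('n) / 2"
  define q where "q = real CARD('n) / (real CARD('n) - 2)"
  define K where "K = ((kappaN CARD('n))\<^sup>2) powr q * pi ^ CARD('n)"
  have "q > 0" unfolding q_def using N by simp
  moreover have "K \<ge> 0" unfolding K_def by simp
  moreover have "\<epsilon> / 2 > 0" using \<epsilon> by simp
  ultimately obtain w where w: "w > 0" and cauchy_small: "w powr q * K < \<epsilon> / 2"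
    by (rule exists_pos_powr_mult_less)
  have "\<epsilon> / 2 * w powr p > 0" using \<epsilon> w by simp
  then obtain R0 where tail_lt:
    "(LINT x|lborel. indicator (- cball 0 R0) x * norm (A x) powr CARD('n)) < \<epsilon> / 2 * w powr p"
    by (rule integral_outside_cball_small[OF int])
  have "w powr (- p) * (LINT x|lborel. indicator (- cball 0 R0) x * norm (A x) powr CARD('n))
      < w powr (- p) * (\<epsilon> / 2 * w powr p)"
    by (rule mult_strict_left_mono[OF tail_lt]) (use w in simp)
  also have "\<dots> = \<epsilon> / 2"
    using w by (simp add: powr_minus)
  finally have tail_small:
    "w powr (- p) * (LINT x|lborel. indicator (- cball 0 R0) x * norm (A x) powr CARD('n)) < \<epsilon> / 2" .
  define c where "c = M\<^sup>2 * (kappaN CARD('n))\<^sup>2 * measure lborel (cball (0::real^'n) R0)"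
  have "4 * c / \<epsilon> \<ge> 0" unfolding c_def using \<epsilon> by simp
  show "\<exists>R. \<forall>\<mu>>0. \<forall>\<xi>. \<mu> + norm \<xi> > R \<longrightarrow> \<bar>H2 A \<mu> \<xi>\<bar> < \<epsilon>"
  proof (intro exI[of _ "R0 + 2 + 4 * c / \<epsilon>"] allI impI)
    fix \<mu> :: real and \<xi> :: "real^'n"
    assume \<mu>: "\<mu> > 0" and far: "\<mu> + norm \<xi> > R0 + 2 + 4 * c / \<epsilon>"
    define D where "D = \<mu> + norm \<xi> - R0"
    have D: "D \<ge> 2" and "4 * c / \<epsilon> < D"
      using far \<open>4 * c / \<epsilon> \<ge> 0\<close> unfolding D_def by linarith+
    then have "4 * c < \<epsilon> * D" using \<epsilon> by (simp add: divide_less_eq mult.commute)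
    then have near_small: "c * (2 / D) < \<epsilon> / 2" using D by (simp add: field_simps)
    have "(LINT x|lborel. (norm (A x))\<^sup>2 * (zbubble \<mu> \<xi> x)\<^sup>2) < \<epsilon> / 2 + \<epsilon> / 2 + \<epsilon> / 2"
      using integral_bubble_energy_le[OF N A bound int \<mu> w D[unfolded D_def],
          folded D_def c_def p_def q_def, folded K_def mult.assoc] near_small tail_small cauchy_small
      by linarith
    moreover have "(LINT x|lborel. (norm (A x))\<^sup>2 * (zbubble \<mu> \<xi> x)\<^sup>2) \<ge> 0"
      by (intro integral_nonneg_AE) simp
    ultimately show "\<bar>H2 A \<mu> \<xi>\<bar> < \<epsilon>"
      unfolding H2_def using \<epsilon> by simp
  qed
qed

theorem mainTheorem10:
  fixes A :: "real^'n \<Rightarrow> real^'n" and r :: real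
  assumes "CARD('n) > 4"
    and "C1_on_UNIV A"
    and "bounded (range A)"
    and "1 < r" and "r < real CARD('n)"
    and "integrable lborel (\<lambda>x. norm (A x) powr r)"
  shows "\<forall>\<epsilon>>0. \<exists>R. \<forall>\<mu>>0. \<forall>\<xi>. \<mu> + norm \<xi> > R \<longrightarrow> \<bar>H2 A \<mu> \<xi>\<bar> < \<epsilon>"
proof -
  \<comment> \<open>Only \<open>N > 2\<close>, \<open>r \<le> N\<close> and the measurability of \<open>A\<close> (via its continuity) are used.\<close>
  have A [measurable]: "A \<in> borel_measurable borel"
    using C1_on_UNIV_imp_continuous[OF assms(2)] by (rule borel_measurable_continuous_onI)
  obtain M where M: "\<And>x. norm (A x) \<le> M"
    using assms(3) unfolding bounded_iff by blast
  have int: "integrable lborel (\<lambda>x. norm (A x) powr CARD('n))"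
  proof (rule integrable_powr_of_bounded[where C=M])
    show "integrable lborel (\<lambda>x. norm (A x) powr r)" by (fact assms(6))
  qed (use M assms(5) in \<open>auto\<close>)
  show ?thesis
    by (rule H2_vanishes_at_infinity[OF _ A M int]) (use assms(1) in simp)
qed

end
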